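(* Let $H\le G$ be finite groups and $\Sigma$ a group of automorphisms of $G$. If the set $\{(\sigma,g)\in\Sigma\times H:\sigma(g)=g\}$ is $4$-large in the direct product group $\Sigma\times H$, then $\sigma(g)=g$ for all $\sigma\in\Sigma$ and $g\in H$.
   Context: A subset $X$ of a group $K$ is $4$-large in $K$ if the intersection of any $4$ left translates $a_1X\cap a_2X\cap a_3X\cap a_4X$ ($a_i\in K$) is non-empty. *)

theory Defs
  imports "HOL-Algebra.Algebra"
begin

definition large :: "('a, 'b) monoid_scheme \<Rightarrow> nat \<Rightarrow> 'a set \<Rightarrow> bool" where
  "large K k A \<longleftrightarrow>
     (\<forall>a. (\<forall>i<k. a i \<in> carrier K) \<longrightarrow> (\<Inter>i<k. a i <#\<^bsub>K\<^esub> A) \<noteq> {})"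

end

theory Submission
  imports Defs
begin

text \<open>Let \<open>S = {(\<sigma>, g) \<in> \<Sigma> \<times> H. \<sigma> g = g}\<close> and let \<open>(\<alpha>, x)\<close> lie in the four translates
  of \<open>S\<close> by \<open>(\<rho>, 1)\<close> and \<open>(\<rho>, g)\<close> for \<open>\<rho> \<in> {1, \<sigma>}\<close>. For fixed \<open>\<rho>\<close>, both translates
  write \<open>\<alpha> = \<rho> \<tau>\<close> with the same \<open>\<tau>\<close>, which fixes both \<open>x\<close> and \<open>g\<^sup>-\<^sup>1 x\<close>, hence fixes \<open>g\<close>.
  So \<open>\<alpha> g = g\<close> (from \<open>\<rho> = 1\<close>) and \<open>\<alpha> g = \<sigma> g\<close> (from \<open>\<rho> = \<sigma>\<close>).\<close>

lemma large_4D: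
  assumes "large K 4 S" "a \<in> carrier K" "b \<in> carrier K" "c \<in> carrier K" "d \<in> carrier K"
  obtains p where "p \<in> a <#\<^bsub>K\<^esub> S" "p \<in> b <#\<^bsub>K\<^esub> S" "p \<in> c <#\<^bsub>K\<^esub> S" "p \<in> d <#\<^bsub>K\<^esub> S"
proof -
  have "\<forall>i<4. [a, b, c, d] ! i \<in> carrier K"
    using assms(2-) by (simp add: numeral_eq_Suc All_less_Suc)
  with assms(1) have "(\<Inter>i<4. [a, b, c, d] ! i <#\<^bsub>K\<^esub> S) \<noteq> {}"
    unfolding large_def by blast
  then obtain p where "\<And>i. i < 4 \<Longrightarrow> p \<in> [a, b, c, d] ! i <#\<^bsub>K\<^esub> S"
    by blast
  from this[of 0] this[of 1] this[of 2] this[of 3] show thesis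
    by (intro that) (simp_all add: numeral_eq_Suc)
qed

lemma mem_l_coset_DirProd:
  "(a, b) \<in> (c, d) <#\<^bsub>A \<times>\<times> B\<^esub> S \<longleftrightarrow> (\<exists>(a', b') \<in> S. a = c \<otimes>\<^bsub>A\<^esub> a' \<and> b = d \<otimes>\<^bsub>B\<^esub> b')"
  by (force simp: l_coset_def)

lemma carrier_AutoGroup [simp]: "carrier (AutoGroup G) = auto G"
  by (simp add: AutoGroup_def)

lemma AutoGroup_mult_apply:
  assumes "\<sigma> \<in> auto G" "\<tau> \<in> auto G" "x \<in> carrier G"
  shows "(\<sigma> \<otimes>\<^bsub>AutoGroup G\<^esub> \<tau>) x = \<sigma> (\<tau> x)"
  using assms by (simp add: AutoGroup_def BijGroup_def auto_def compose_def)

lemma (in group) auto_fixes_left_factor: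
  assumes "\<tau> \<in> auto G" "x \<in> carrier G" "y \<in> carrier G"
    and "\<tau> y = y" "\<tau> (x \<otimes> y) = x \<otimes> y"
  shows "\<tau> x = x"
proof -
  have "\<tau> \<in> hom G G" using assms(1) by (simp add: auto_def)
  then have "\<tau> x \<otimes> y = x \<otimes> y" "\<tau> x \<in> carrier G"
    using assms by (auto simp: hom_def)
  then show ?thesis using r_cancel assms(2,3) by blast
qed

lemma (in group) common_point_translates_fixed_pairs:
  fixes \<Sigma> :: "('a \<Rightarrow> 'a) set" and H :: "'a set"
  defines "K \<equiv> (AutoGroup G)\<lparr>carrier := \<Sigma>\<rparr> \<times>\<times> G\<lparr>carrier := H\<rparr>"
    and "S \<equiv> {(\<sigma>, g) \<in> \<Sigma> \<times> H. \<sigma> g = g}"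
  assumes \<Sigma>: "subgroup \<Sigma> (AutoGroup G)" and H: "subgroup H G"
    and "\<rho> \<in> \<Sigma>" "g \<in> H"
    and "p \<in> (\<rho>, \<one>) <#\<^bsub>K\<^esub> S" "p \<in> (\<rho>, g) <#\<^bsub>K\<^esub> S"
  shows "\<exists>\<tau> \<in> \<Sigma>. fst p = \<rho> \<otimes>\<^bsub>AutoGroup G\<^esub> \<tau> \<and> \<tau> g = g"
proof -
  interpret AG: group "AutoGroup G" by (rule AutoGroup)
  obtain \<alpha> x where p: "p = (\<alpha>, x)" by fastforce
  obtain \<tau> y \<tau>' y' where
      \<tau>: "\<tau> \<in> \<Sigma>" "y \<in> H" "\<tau> y = y" "\<alpha> = \<rho> \<otimes>\<^bsub>AutoGroup G\<^esub> \<tau>" "x = \<one> \<otimes> y"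
    and \<tau>': "\<tau>' \<in> \<Sigma>" "y' \<in> H" "\<tau>' y' = y'" "\<alpha> = \<rho> \<otimes>\<^bsub>AutoGroup G\<^esub> \<tau>'" "x = g \<otimes> y'"
    using assms(5-) unfolding p by (auto simp: K_def S_def mem_l_coset_DirProd)
  have "\<tau>' = \<tau>"
    using AG.l_cancel[of \<rho> \<tau>' \<tau>] \<tau>(1,4) \<tau>'(1,4) \<open>\<rho> \<in> \<Sigma>\<close> subgroup.mem_carrier[OF \<Sigma>] by simp
  moreover have "\<tau> g = g"
  proof (rule auto_fixes_left_factor)
    show "\<tau> \<in> auto G" using \<tau>(1) subgroup.mem_carrier[OF \<Sigma>] by simp
    show "g \<in> carrier G" "y' \<in> carrier G"
      using \<open>g \<in> H\<close> \<tau>'(2) subgroup.mem_carrier[OF H] by auto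
    then show "\<tau> (g \<otimes> y') = g \<otimes> y'"
      using \<tau> \<tau>'(5) subgroup.mem_carrier[OF H] by simp
  qed (use \<open>\<tau>' = \<tau>\<close> \<tau>'(3) in simp)
  ultimately show ?thesis using \<tau>(1,4) p by auto
qed

theorem theorem7p2:
  fixes G :: "('a, 'b) monoid_scheme" and H :: "'a set"
    and \<Sigma> :: "('a \<Rightarrow> 'a) set"
  assumes "group G" and "finite (carrier G)"
    and "subgroup H G"
    and "subgroup \<Sigma> (AutoGroup G)"
    and "large ((AutoGroup G)\<lparr>carrier := \<Sigma>\<rparr> \<times>\<times> G\<lparr>carrier := H\<rparr>) 4
           {(\<sigma>, g) \<in> \<Sigma> \<times> H. \<sigma> g = g}"
  shows "\<forall>\<sigma> \<in> \<Sigma>. \<forall>g \<in> H. \<sigma> g = g"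
proof (intro ballI)
  fix \<sigma> g assume "\<sigma> \<in> \<Sigma>" "g \<in> H"
  interpret group G by fact
  let ?K = "(AutoGroup G)\<lparr>carrier := \<Sigma>\<rparr> \<times>\<times> G\<lparr>carrier := H\<rparr>"
  let ?S = "{(\<sigma>, g) \<in> \<Sigma> \<times> H. \<sigma> g = g}"
  let ?e = "\<one>\<^bsub>AutoGroup G\<^esub>"
  have "?e \<in> \<Sigma>" "\<one>\<^bsub>G\<^esub> \<in> H"
    using assms(3,4) subgroup.one_closed by blast+
  with \<open>\<sigma> \<in> \<Sigma>\<close> \<open>g \<in> H\<close>
  have "(?e, \<one>\<^bsub>G\<^esub>) \<in> carrier ?K" "(?e, g) \<in> carrier ?K"
    "(\<sigma>, \<one>\<^bsub>G\<^esub>) \<in> carrier ?K" "(\<sigma>, g) \<in> carrier ?K"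
    by simp_all
  then obtain p where p:
    "p \<in> (?e, \<one>\<^bsub>G\<^esub>) <#\<^bsub>?K\<^esub> ?S" "p \<in> (?e, g) <#\<^bsub>?K\<^esub> ?S"
    "p \<in> (\<sigma>, \<one>\<^bsub>G\<^esub>) <#\<^bsub>?K\<^esub> ?S" "p \<in> (\<sigma>, g) <#\<^bsub>?K\<^esub> ?S"
    by (rule large_4D[OF assms(5)])
  obtain \<tau> where \<tau>: "\<tau> \<in> \<Sigma>" "fst p = ?e \<otimes>\<^bsub>AutoGroup G\<^esub> \<tau>" "\<tau> g = g"
    using common_point_translates_fixed_pairs[OF assms(4,3) \<open>?e \<in> \<Sigma>\<close> \<open>g \<in> H\<close> p(1,2)] by blast
  obtain \<tau>' where \<tau>': "\<tau>' \<in> \<Sigma>" "fst p = \<sigma> \<otimes>\<^bsub>AutoGroup G\<^esub> \<tau>'" "\<tau>' g = g"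
    using common_point_translates_fixed_pairs[OF assms(4,3) \<open>\<sigma> \<in> \<Sigma>\<close> \<open>g \<in> H\<close> p(3,4)] by blast
  interpret AG: group "AutoGroup G" by (rule AutoGroup)
  have auto: "\<tau> \<in> auto G" "\<tau>' \<in> auto G" "\<sigma> \<in> auto G"
    using \<tau>(1) \<tau>'(1) \<open>\<sigma> \<in> \<Sigma>\<close> subgroup.mem_carrier[OF assms(4)] by simp_all
  have "g \<in> carrier G"
    using \<open>g \<in> H\<close> subgroup.mem_carrier[OF assms(3)] by simp
  with auto have "fst p g = \<sigma> g"
    by (simp add: \<tau>'(2,3) AutoGroup_mult_apply)
  moreover have "fst p = \<tau>"
    using \<tau>(2) auto(1) by simp
  ultimately show "\<sigma> g = g" using \<tau>(3) by simp
qed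

end
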